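(* Let $(L,\delta_L^* )$ be an iterative $q$-difference field and $(M,\delta_M^* )$ an iterative $q$-difference module over $L$. Set $L_0=\bigcap_{j\notin n\mathbb N}\mathrm{Ker}(\delta_L^{(j)})$ and $M_0=\bigcap_{j\notin n\mathbb N}\mathrm{Ker}(\delta_M^{(j)})$. Then $(M_0,(\partial_M^{(k)}:=\delta_M^{(nk)})_{k\in\mathbb N})$ is an iterative differential module over the iterative differential field $(L_0,(\partial^{(k)}:=\delta_L^{(nk)})_{k\in\mathbb N})$.
   Context: Let $C$ be an algebraically closed field and $q\in C$ a primitive $n$-th root of unity, $n\ge2$; $F=C(t)$ with $\sigma_q(f(t))=f(qt)$; $\binom{r}{k}_q$ is the value at $q$ of the Gaussian polynomial $\prod_{i=1}^{k}\frac{1-x^{r-i+1}}{1-x^{i}}$. An iterative $q$-difference field is a field $L\supseteq F$ with an automorphism $\sigma_q$ extending that of $F$ and maps $\delta_L^{(k)}$ with $\delta_L^{(0)}=\mathrm{id}$, $\delta_L^{(1)}=\frac{\sigma_q-\mathrm{id}}{(q-1)t}$, additivity, $\delta_L^{(k)}(ab)=\sum_{i+j=k}\sigma_q^i(\delta_L^{(j)}(a))\delta_L^{(i)}(b)$, $\delta_L^{(i)}\circ\delta_L^{(j)}=\binom{i+j}{i}_q\delta_L^{(i+j)}$. An iterative $q$-difference module over $L$ is a finite-dimensional $L$-vector space $M$ with maps $\delta_M^{(k)}$, $\delta_M^{(0)}=\mathrm{id}$, $(q-1)t\delta_M^{(1)}+\mathrm{id}$ bijective, additive, $\delta_M^{(k)}(am)=\sum_{i+j=k}\sigma_q^i(\delta_L^{(j)}(a))\delta_M^{(i)}(m)$,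 $\delta_M^{(i)}\circ\delta_M^{(j)}=\binom{i+j}{i}_q\delta_M^{(i+j)}$. An iterative differential field is a field $K$ with maps $\partial^{(k)}:K\to K$ ($k\in\mathbb N$) such that $\partial^{(0)}=\mathrm{id}$, each $\partial^{(k)}$ is additive, $\partial^{(k)}(ab)=\sum_{i+j=k}\partial^{(i)}(a)\partial^{(j)}(b)$, and $\partial^{(i)}\circ\partial^{(j)}=\binom{i+j}{i}\partial^{(i+j)}$ (ordinary binomial coefficient). An iterative differential module over it is a finite-dimensional $K$-vector space $N$ with maps $\partial_N^{(k)}$ such that $\partial_N^{(0)}=\mathrm{id}$, each $\partial_N^{(k)}$ is additive, $\partial_N^{(k)}(am)=\sum_{i+j=k}\partial^{(i)}(a)\partial_N^{(j)}(m)$, and $\partial_N^{(i)}\circ\partial_N^{(j)}=\binom{i+j}{i}\partial_N^{(i+j)}$. *)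

theory Defs
  imports "HOL-Computational_Algebra.Polynomial"
begin

text \<open>The Gaussian polynomial: prod_{i=1}^k (1 - x^(r-i+1)) / (1 - x^i), an integer
  polynomial (the division is exact).\<close>
definition gauss_poly :: "nat \<Rightarrow> nat \<Rightarrow> int poly" where
  "gauss_poly r k =
     (\<Prod>i\<in>{1..k}. 1 - monom 1 (r + 1 - i)) div (\<Prod>i\<in>{1..k}. 1 - monom 1 i)"

definition qbinom :: "'a::comm_ring_1 \<Rightarrow> nat \<Rightarrow> nat \<Rightarrow> 'a" where
  "qbinom x r k = poly (map_poly of_int (gauss_poly r k)) x"

definition primitive_root :: "'c::field \<Rightarrow> nat \<Rightarrow> bool" where
  "primitive_root q n \<longleftrightarrow> q ^ n = 1 \<and> (\<forall>m. 0 < m \<and> m < n \<longrightarrow> q ^ m \<noteq> 1)"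

definition alg_closed_type :: "'c::field itself \<Rightarrow> bool" where
  "alg_closed_type _ \<longleftrightarrow> (\<forall>p :: 'c poly. 0 < degree p \<longrightarrow> (\<exists>x. poly p x = 0))"

definition field_embedding :: "('c::field \<Rightarrow> 'L::field) \<Rightarrow> bool" where
  "field_embedding \<iota> \<longleftrightarrow> inj \<iota> \<and> \<iota> 1 = 1 \<and>
     (\<forall>a b. \<iota> (a + b) = \<iota> a + \<iota> b) \<and> (\<forall>a b. \<iota> (a * b) = \<iota> a * \<iota> b)"

text \<open>L contains F = C(t): the image of C under \<iota> together with an element t of L
  transcendental over \<iota>(C) (so that the subfield generated is a copy of C(t)).\<close>
definition contains_rational_function_field :: "('c::field \<Rightarrow> 'L::field) \<Rightarrow> 'L \<Rightarrow> bool" where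
  "contains_rational_function_field \<iota> t \<longleftrightarrow> field_embedding \<iota> \<and>
     (\<forall>p :: 'c poly. p \<noteq> 0 \<longrightarrow> poly (map_poly \<iota> p) t \<noteq> 0)"

definition iter_qdiff_field ::
  "('c::field \<Rightarrow> 'L::field) \<Rightarrow> 'c \<Rightarrow> 'L \<Rightarrow> ('L \<Rightarrow> 'L) \<Rightarrow> (nat \<Rightarrow> 'L \<Rightarrow> 'L) \<Rightarrow> bool" where
  "iter_qdiff_field \<iota> q t \<sigma> \<delta> \<longleftrightarrow>
     \<comment> \<open>\<sigma> is a field automorphism of L extending \<sigma>_q on F = C(t), i.e. f(t) \<mapsto> f(qt)\<close>
     bij \<sigma> \<and> \<sigma> 1 = 1 \<and> (\<forall>a b. \<sigma> (a + b) = \<sigma> a + \<sigma> b) \<and> (\<forall>a b. \<sigma> (a * b) = \<sigma> a * \<sigma> b) \<and>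
     (\<forall>c. \<sigma> (\<iota> c) = \<iota> c) \<and> \<sigma> t = \<iota> q * t \<and>
     \<delta> 0 = id \<and>
     (\<forall>a. \<delta> 1 a = (\<sigma> a - a) / ((\<iota> q - 1) * t)) \<and>
     (\<forall>k a b. \<delta> k (a + b) = \<delta> k a + \<delta> k b) \<and>
     (\<forall>k a b. \<delta> k (a * b) = (\<Sum>i\<le>k. (\<sigma> ^^ i) (\<delta> (k - i) a) * \<delta> i b)) \<and>
     (\<forall>i j a. \<delta> i (\<delta> j a) = \<iota> (qbinom q (i + j) i) * \<delta> (i + j) a)"

definition iter_qdiff_module ::
  "('c::field \<Rightarrow> 'L::field) \<Rightarrow> 'c \<Rightarrow> 'L \<Rightarrow> ('L \<Rightarrow> 'L) \<Rightarrow> (nat \<Rightarrow> 'L \<Rightarrow> 'L) \<Rightarrow>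
   ('L \<Rightarrow> 'm::ab_group_add \<Rightarrow> 'm) \<Rightarrow> (nat \<Rightarrow> 'm \<Rightarrow> 'm) \<Rightarrow> bool" where
  "iter_qdiff_module \<iota> q t \<sigma> \<delta> scal \<delta>M \<longleftrightarrow>
     \<comment> \<open>M is a finite-dimensional L-vector space\<close>
     vector_space scal \<and> (\<exists>B. finite B \<and> module.span scal B = UNIV) \<and>
     \<delta>M 0 = id \<and>
     bij (\<lambda>m. scal ((\<iota> q - 1) * t) (\<delta>M 1 m) + m) \<and>
     (\<forall>k m m'. \<delta>M k (m + m') = \<delta>M k m + \<delta>M k m') \<and>
     (\<forall>k a m. \<delta>M k (scal a m) = (\<Sum>i\<le>k. scal ((\<sigma> ^^ i) (\<delta> (k - i) a)) (\<delta>M i m))) \<and>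
     (\<forall>i j m. \<delta>M i (\<delta>M j m) = scal (\<iota> (qbinom q (i + j) i)) (\<delta>M (i + j) m))"

definition iter_diff_field :: "'L::field set \<Rightarrow> (nat \<Rightarrow> 'L \<Rightarrow> 'L) \<Rightarrow> bool" where
  "iter_diff_field K D \<longleftrightarrow>
     0 \<in> K \<and> 1 \<in> K \<and> (\<forall>a\<in>K. \<forall>b\<in>K. a + b \<in> K \<and> a * b \<in> K) \<and>
     (\<forall>a\<in>K. - a \<in> K \<and> inverse a \<in> K) \<and>
     (\<forall>k. \<forall>a\<in>K. D k a \<in> K) \<and>
     (\<forall>a\<in>K. D 0 a = a) \<and>
     (\<forall>k. \<forall>a\<in>K. \<forall>b\<in>K. D k (a + b) = D k a + D k b) \<and>
     (\<forall>k. \<forall>a\<in>K. \<forall>b\<in>K. D k (a * b) = (\<Sum>i\<le>k. D i a * D (k - i) b)) \<and>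
     (\<forall>i j. \<forall>a\<in>K. D i (D j a) = of_nat ((i + j) choose i) * D (i + j) a)"

definition iter_diff_module ::
  "'L::field set \<Rightarrow> (nat \<Rightarrow> 'L \<Rightarrow> 'L) \<Rightarrow> ('L \<Rightarrow> 'm::ab_group_add \<Rightarrow> 'm) \<Rightarrow> 'm set \<Rightarrow>
   (nat \<Rightarrow> 'm \<Rightarrow> 'm) \<Rightarrow> bool" where
  "iter_diff_module K D scal N DN \<longleftrightarrow>
     0 \<in> N \<and> (\<forall>m\<in>N. \<forall>m'\<in>N. m + m' \<in> N) \<and> (\<forall>a\<in>K. \<forall>m\<in>N. scal a m \<in> N) \<and>
     (\<exists>B. finite B \<and> B \<subseteq> N \<and>
        (\<forall>m\<in>N. \<exists>f. (\<forall>b\<in>B. f b \<in> K) \<and> m = (\<Sum>b\<in>B. scal (f b) b))) \<and>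
     (\<forall>k. \<forall>m\<in>N. DN k m \<in> N) \<and>
     (\<forall>m\<in>N. DN 0 m = m) \<and>
     (\<forall>k. \<forall>m\<in>N. \<forall>m'\<in>N. DN k (m + m') = DN k m + DN k m') \<and>
     (\<forall>k. \<forall>a\<in>K. \<forall>m\<in>N. DN k (scal a m) = (\<Sum>i\<le>k. scal (D i a) (DN (k - i) m))) \<and>
     (\<forall>i j. \<forall>m\<in>N. DN i (DN j m) = scal (of_nat ((i + j) choose i)) (DN (i + j) m))"

end

theory Submission
  imports Defs
begin

text \<open>Since \<open>q\<close> is a primitive \<open>n\<close>-th root of unity, the q-analogue of Lucas' theorem gives
  \<open>[na, nb]\<^sub>q = (a choose b)\<close>, so the operators \<open>\<delta>(nk)\<close> compose like an iterative
  derivation. On \<open>L\<^sub>0\<close> the operator \<open>\<delta>(1) = (\<sigma> - id) / ((q - 1) t)\<close> vanishes, so \<open>\<sigma>\<close>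
  fixes \<open>L\<^sub>0\<close> and the twisted Leibniz rule, restricted to indices divisible by \<open>n\<close>, becomes
  the ordinary one. The kernels are closed under products because, when \<open>n\<close> does not divide
  \<open>j\<close>, each term \<open>\<sigma>\<^sup>i(\<delta>(j - i) a) \<delta>(i) b\<close> has an index not divisible by \<open>n\<close>. Finally, a
  maximal \<open>L\<close>-independent subset of \<open>M\<^sub>0\<close> is finite and spans \<open>M\<^sub>0\<close> over \<open>L\<^sub>0\<close>: its
  coefficients lie in \<open>L\<^sub>0\<close> by induction on \<open>j\<close>.\<close>

definition qpoch_poly :: "nat \<Rightarrow> int poly" where
  "qpoch_poly k = (\<Prod>i\<in>{1..k}. 1 - monom 1 i)"

definition qfalling_poly :: "nat \<Rightarrow> nat \<Rightarrow> int poly" where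
  "qfalling_poly r k = (\<Prod>i\<in>{1..k}. 1 - monom 1 (r + 1 - i))"

fun gauss_pascal :: "nat \<Rightarrow> nat \<Rightarrow> int poly" where
  "gauss_pascal r 0 = 1"
| "gauss_pascal 0 (Suc k) = 0"
| "gauss_pascal (Suc r) (Suc k) = gauss_pascal r k + monom 1 (Suc k) * gauss_pascal r (Suc k)"

lemma qfalling_poly_eq_0: "r < k \<Longrightarrow> qfalling_poly r k = 0"
  unfolding qfalling_poly_def
  by (rule prod_zero) (auto intro!: bexI[of _ "Suc r"] simp: monom_0 one_pCons)

lemma qfalling_poly_Suc: "qfalling_poly r (Suc k) = qfalling_poly r k * (1 - monom 1 (r - k))"
  unfolding qfalling_poly_def by simp

lemma qfalling_poly_Suc_Suc: "qfalling_poly (Suc r) (Suc k) = (1 - monom 1 (Suc r)) * qfalling_poly r k"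
proof -
  have "qfalling_poly (Suc r) (Suc k) =
      (1 - monom 1 (Suc r)) * (\<Prod>i\<in>{Suc 1..Suc k}. 1 - monom 1 (Suc r + 1 - i))"
    unfolding qfalling_poly_def by (subst prod.atLeast_Suc_atMost) auto
  also have "(\<Prod>i\<in>{Suc 1..Suc k}. 1 - monom 1 (Suc r + 1 - i)) = qfalling_poly r k"
    unfolding qfalling_poly_def by (subst prod.shift_bounds_cl_Suc_ivl) simp
  finally show ?thesis .
qed

lemma gauss_pascal_mult_qpoch_poly: "gauss_pascal r k * qpoch_poly k = qfalling_poly r k"
proof (induction r arbitrary: k)
  case 0
  then show ?case
    by (cases k) (auto simp: qpoch_poly_def qfalling_poly_def monom_0 one_pCons
        intro!: prod_zero[symmetric] bexI[of _ 1])
next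
  case (Suc r)
  show ?case
  proof (cases k)
    case 0
    then show ?thesis by (simp add: qpoch_poly_def qfalling_poly_def)
  next
    case (Suc k')
    have "gauss_pascal (Suc r) (Suc k') * qpoch_poly (Suc k') =
        (gauss_pascal r k' * qpoch_poly k') * (1 - monom 1 (Suc k'))
        + monom 1 (Suc k') * (gauss_pascal r (Suc k') * qpoch_poly (Suc k'))"
      by (simp add: qpoch_poly_def algebra_simps)
    also have "\<dots> = qfalling_poly r k' * (1 - monom 1 (Suc k'))
        + monom 1 (Suc k') * qfalling_poly r (Suc k')"
      using Suc.IH by simp
    also have "\<dots> = (1 - monom 1 (Suc r)) * qfalling_poly r k'"
    proof (cases "k' \<le> r")
      case True
      then have "monom (1::int) (Suc k') * monom 1 (r - k') = monom 1 (Suc r)"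
        by (simp add: mult_monom)
      then show ?thesis by (simp add: qfalling_poly_Suc algebra_simps)
    next
      case False
      then show ?thesis by (simp add: qfalling_poly_eq_0 qfalling_poly_Suc)
    qed
    finally show ?thesis using Suc by (simp add: qfalling_poly_Suc_Suc)
  qed
qed

lemma qpoch_poly_nonzero: "qpoch_poly k \<noteq> 0"
proof -
  have "1 - monom (1::int) i \<noteq> 0" if "i \<ge> 1" for i
  proof
    assume "1 - monom (1::int) i = 0"
    then have "coeff (1 - monom (1::int) i) 0 = 0" by simp
    with that show False by (simp add: coeff_monom)
  qed
  then show ?thesis unfolding qpoch_poly_def by (subst prod_zero_iff) auto
qed

lemma gauss_poly_eq_gauss_pascal: "gauss_poly r k = gauss_pascal r k"
proof -
  have "gauss_poly r k = qfalling_poly r k div qpoch_poly k"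
    unfolding gauss_poly_def qfalling_poly_def qpoch_poly_def ..
  also have "\<dots> = gauss_pascal r k"
    by (simp add: gauss_pascal_mult_qpoch_poly[symmetric] qpoch_poly_nonzero)
  finally show ?thesis .
qed

lemma map_poly_of_int_add:
  "map_poly (of_int :: int \<Rightarrow> 'a::comm_ring_1) (p + q) = map_poly of_int p + map_poly of_int q"
  by (intro poly_eqI) (simp add: coeff_map_poly)

lemma map_poly_of_int_diff:
  "map_poly (of_int :: int \<Rightarrow> 'a::comm_ring_1) (p - q) = map_poly of_int p - map_poly of_int q"
  by (intro poly_eqI) (simp add: coeff_map_poly)

lemma map_poly_of_int_mult:
  "map_poly (of_int :: int \<Rightarrow> 'a::comm_ring_1) (p * q) = map_poly of_int p * map_poly of_int q"
  by (induction p) (simp_all add: map_poly_of_int_add map_poly_smult map_poly_pCons)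

lemma map_poly_of_int_prod:
  "map_poly (of_int :: int \<Rightarrow> 'a::comm_ring_1) (prod f A) = (\<Prod>i\<in>A. map_poly of_int (f i))"
  by (induction A rule: infinite_finite_induct) (simp_all add: map_poly_of_int_mult)

subsection \<open>q-binomial coefficients\<close>

lemma qbinom_eq_gauss_pascal: "qbinom x r k = poly (map_poly of_int (gauss_pascal r k)) x"
  unfolding qbinom_def gauss_poly_eq_gauss_pascal ..

lemma qbinom_0_right [simp]: "qbinom x r 0 = 1"
  by (simp add: qbinom_eq_gauss_pascal)

lemma qbinom_0_Suc [simp]: "qbinom x 0 (Suc k) = 0"
  by (simp add: qbinom_eq_gauss_pascal)

lemma qbinom_Suc_Suc: "qbinom x (Suc r) (Suc k) = qbinom x r k + x ^ Suc k * qbinom x r (Suc k)"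
  by (simp add: qbinom_eq_gauss_pascal map_poly_of_int_add map_poly_of_int_mult
      map_poly_monom poly_monom)

lemma qbinom_mult_prod:
  "qbinom (x::'a::comm_ring_1) r k * (\<Prod>i\<in>{1..k}. 1 - x ^ i) = (\<Prod>i\<in>{1..k}. 1 - x ^ (r + 1 - i))"
  using arg_cong[OF gauss_pascal_mult_qpoch_poly, of "\<lambda>p. poly (map_poly (of_int :: int \<Rightarrow> 'a) p) x"]
  by (simp add: qbinom_eq_gauss_pascal map_poly_of_int_mult qpoch_poly_def qfalling_poly_def
      map_poly_of_int_prod map_poly_of_int_diff map_poly_monom poly_monom poly_prod)

lemma qbinom_eq_0: "r < k \<Longrightarrow> qbinom x r k = 0"
proof (induction r arbitrary: k)
  case 0
  then show ?case by (cases k) auto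
next
  case (Suc r)
  then show ?case by (cases k) (auto simp: qbinom_Suc_Suc)
qed

lemma qbinom_diag [simp]: "qbinom x r r = 1"
  by (induction r) (auto simp: qbinom_Suc_Suc qbinom_eq_0)

lemma qbinom_primitive_root_eq_0:
  assumes "primitive_root q n" and "0 < s" and "s < n"
  shows "qbinom q n s = 0"
proof -
  have "qbinom q n s * (\<Prod>i\<in>{1..s}. 1 - q ^ i) = (\<Prod>i\<in>{1..s}. 1 - q ^ (n + 1 - i))"
    by (rule qbinom_mult_prod)
  also have "\<dots> = 0"
    using assms unfolding primitive_root_def by (intro prod_zero) (auto intro!: bexI[of _ 1])
  finally show ?thesis
    using assms unfolding primitive_root_def by (auto simp: prod_zero_iff)
qed

lemma qbinom_Suc_mult_add:
  assumes "q ^ n = 1" and "0 < s"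
  shows "qbinom q (Suc N) (n * b + s) = qbinom q N (n * b + (s - 1)) + q ^ s * qbinom q N (n * b + s)"
  using assms qbinom_Suc_Suc[of q N "n * b + (s - 1)"]
  by (simp add: power_add power_mult)

lemma qbinom_Suc_mult_Suc:
  assumes "q ^ n = 1" and "0 < n"
  shows "qbinom q (Suc N) (n * Suc b) = qbinom q N (n * b + (n - 1)) + qbinom q N (n * Suc b)"
proof -
  have qpow: "q ^ (n * Suc b) = 1"
    using assms(1) by (simp add: power_add power_mult)
  have eq: "n * Suc b = Suc (n * b + (n - 1))"
    using assms(2) by simp
  have "qbinom q (Suc N) (n * Suc b) =
      qbinom q N (n * b + (n - 1)) + q ^ (n * Suc b) * qbinom q N (n * Suc b)"
    unfolding eq by (rule qbinom_Suc_Suc)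
  then show ?thesis
    unfolding qpow by simp
qed

lemma qbinom_lucas:
  fixes q :: "'a::field"
  assumes q: "primitive_root q n" and "r < n" and "s < n"
  shows "qbinom q (n * a + r) (n * b + s) = of_nat (a choose b) * qbinom q r s"
  using assms(2,3)
proof (induction "n * a + r" arbitrary: a r b s)
  case 0
  then show ?case by (cases "b = 0"; cases s) (auto simp: qbinom_eq_0 binomial_eq_0)
next
  case (Suc N)
  have qn: "q ^ n = 1" and n: "0 < n"
    using q Suc.prems unfolding primitive_root_def by auto
  \<comment> \<open>the base-\<open>n\<close> digits of \<open>N = n a + r - 1\<close>\<close>
  obtain a' r' where N: "N = n * a' + r'" "r' < n"
    and a'r': "(a = a' \<and> r = Suc r') \<or> (a = Suc a' \<and> Suc r' = n \<and> r = 0)"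
  proof (cases r)
    case 0
    with Suc.hyps n obtain a' where "a = Suc a'" by (cases a) auto
    with 0 Suc.hyps n show ?thesis by (intro that[of a' "n - 1"]) auto
  next
    case (Suc r')
    with \<open>Suc N = n * a + r\<close> \<open>r < n\<close> show ?thesis by (intro that[of a r']) auto
  qed
  show ?case
  proof (cases s)
    case 0
    show ?thesis
    proof (cases b)
      case (Suc b')
      have "qbinom q (n * a + r) (n * b + s) = qbinom q (Suc N) (n * Suc b')"
        using Suc.hyps(2) by (simp add: \<open>b = Suc b'\<close> 0)
      also have "\<dots> = qbinom q N (n * b' + (n - 1)) + qbinom q N (n * Suc b')"
        by (rule qbinom_Suc_mult_Suc[OF qn n])
      also have "\<dots> = of_nat (a' choose b') * qbinom q r' (n - 1) + of_nat (a' choose Suc b')"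
        using Suc.hyps(1)[OF N(1), of "n - 1" b'] Suc.hyps(1)[OF N(1), of 0 "Suc b'"] N n
        by simp
      also have "\<dots> = of_nat (a choose b) * qbinom q r s"
        using a'r' \<open>r < n\<close> by (auto simp: qbinom_eq_0 0 \<open>b = Suc b'\<close>)
      finally show ?thesis .
    qed (simp add: 0)
  next
    case (Suc s')
    have "qbinom q (n * a + r) (n * b + s) = qbinom q (Suc N) (n * b + s)"
      using Suc.hyps(2) by simp
    also have "\<dots> = qbinom q N (n * b + s') + q ^ s * qbinom q N (n * b + s)"
      using qbinom_Suc_mult_add[OF qn, of s] Suc by simp
    also have "\<dots> = of_nat (a' choose b) * qbinom q (Suc r') s"
      using Suc.hyps(1)[OF N(1), of s' b] Suc.hyps(1)[OF N(1), of s b] N \<open>s < n\<close>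
      by (simp add: qbinom_Suc_Suc Suc algebra_simps)
    also have "\<dots> = of_nat (a choose b) * qbinom q r s"
      using a'r' qbinom_primitive_root_eq_0[OF q, of s] \<open>s < n\<close> Suc
      by (auto simp: qbinom_eq_0)
    finally show ?thesis .
  qed
qed

lemma qbinom_mult_mult:
  fixes q :: "'a::field"
  assumes "primitive_root q n" and "0 < n"
  shows "qbinom q (n * a) (n * b) = of_nat (a choose b)"
  using qbinom_lucas[OF assms(1), of 0 0 a b] assms(2) by simp

subsection \<open>Twisted iterative derivations\<close>

definition kernel_off_multiples :: "nat \<Rightarrow> (nat \<Rightarrow> 'a \<Rightarrow> 'b::zero) \<Rightarrow> 'a set" where
  "kernel_off_multiples n D = {x. \<forall>j. \<not> n dvd j \<longrightarrow> D j x = 0}"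

lemma kernel_off_multiples_0:
  "(\<And>k. additive (D k)) \<Longrightarrow> 0 \<in> kernel_off_multiples n D"
  by (simp add: kernel_off_multiples_def additive.zero)

lemma kernel_off_multiples_add:
  "(\<And>k. additive (D k)) \<Longrightarrow> x \<in> kernel_off_multiples n D \<Longrightarrow> y \<in> kernel_off_multiples n D \<Longrightarrow>
    x + y \<in> kernel_off_multiples n D"
  by (simp add: kernel_off_multiples_def additive.add)

lemma kernel_off_multiples_uminus:
  "(\<And>k. additive (D k)) \<Longrightarrow> x \<in> kernel_off_multiples n D \<Longrightarrow> - x \<in> kernel_off_multiples n D"
  by (simp add: kernel_off_multiples_def additive.minus)

lemma sum_atMost_multiples:
  fixes h :: "nat \<Rightarrow> 'a::comm_monoid_add"
  assumes "0 < n" and "\<And>i. \<not> n dvd i \<Longrightarrow> h i = 0"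
  shows "(\<Sum>i\<le>n * k. h i) = (\<Sum>i\<le>k. h (n * i))"
proof -
  have "(\<Sum>i\<le>k. h (n * i)) = sum h ((*) n ` {..k})"
    using assms(1) by (subst sum.reindex) (auto simp: inj_on_def)
  also have "\<dots> = (\<Sum>i\<le>n * k. h i)"
  proof (intro sum.mono_neutral_left ballI)
    fix i assume i: "i \<in> {..n * k} - (*) n ` {..k}"
    show "h i = 0"
    proof (rule assms(2), rule notI, elim dvdE)
      fix c assume "i = n * c"
      with i assms(1) show False by auto
    qed
  qed auto
  finally show ?thesis by simp
qed

lemma funpow_fixed_point: "f x = x \<Longrightarrow> (f ^^ n) x = x"
  by (induction n) simp_all

lemma sum_atMost_rev:
  fixes g :: "nat \<Rightarrow> 'a::comm_monoid_add"
  shows "(\<Sum>i\<le>k. g i) = (\<Sum>i\<le>k. g (k - i))"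
  using sum.atLeastAtMost_rev[of g 0 k] by (simp add: atLeast0AtMost)

text \<open>The axioms of an iterative q-difference field, with the coefficients \<open>\<beta> r k\<close> of the
  composition law (the q-binomials \<open>[r, k]\<^sub>q\<close>) left abstract.\<close>
locale twisted_iterative_derivation =
  fixes \<sigma> :: "'a::field \<Rightarrow> 'a" and \<delta> :: "nat \<Rightarrow> 'a \<Rightarrow> 'a" and \<beta> :: "nat \<Rightarrow> nat \<Rightarrow> 'a"
  assumes sigma_add: "\<sigma> (a + b) = \<sigma> a + \<sigma> b"
    and sigma_one: "\<sigma> 1 = 1"
    and delta_0: "\<delta> 0 a = a"
    and delta_add: "\<delta> k (a + b) = \<delta> k a + \<delta> k b"
    and delta_mult: "\<delta> k (a * b) = (\<Sum>i\<le>k. (\<sigma> ^^ i) (\<delta> (k - i) a) * \<delta> i b)"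
    and delta_delta: "\<delta> i (\<delta> j a) = \<beta> (i + j) i * \<delta> (i + j) a"
begin

lemma additive_delta: "additive (\<delta> k)"
  by unfold_locales (rule delta_add)

lemma funpow_sigma_0 [simp]: "(\<sigma> ^^ i) 0 = 0"
  using additive.zero[OF additive.intro, OF sigma_add] by (induction i) simp_all

lemma funpow_sigma_1 [simp]: "(\<sigma> ^^ i) 1 = 1"
  by (induction i) (simp_all add: sigma_one)

lemma delta_1_eq_0: "0 < j \<Longrightarrow> \<delta> j 1 = 0"
proof (induction j rule: less_induct)
  case (less j)
  have "\<delta> j 1 = \<delta> j (1 * 1)" by simp
  also have "\<dots> = (\<Sum>i\<le>j. (\<sigma> ^^ i) (\<delta> (j - i) 1) * \<delta> i 1)" by (rule delta_mult)
  also have "\<dots> = (\<Sum>i\<in>{0, j}. (\<sigma> ^^ i) (\<delta> (j - i) 1) * \<delta> i 1)"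
    using less by (intro sum.mono_neutral_right) auto
  also have "\<dots> = \<delta> j 1 + \<delta> j 1" using less by (simp add: delta_0)
  finally show ?case by (metis add.right_neutral add_left_cancel)
qed

lemma kernel_off_multiples_1: "1 \<in> kernel_off_multiples n \<delta>"
  by (auto simp: kernel_off_multiples_def intro!: delta_1_eq_0 Nat.gr0I)

lemma kernel_off_multiples_delta:
  assumes "a \<in> kernel_off_multiples n \<delta>"
  shows "\<delta> (n * k) a \<in> kernel_off_multiples n \<delta>"
  using assms by (simp add: kernel_off_multiples_def delta_delta dvd_add_left_iff)

end

locale twisted_iterative_module =
  twisted_iterative_derivation \<sigma> \<delta> \<beta> + vector_space scal
  for \<sigma> \<delta> \<beta> and scal :: "'a::field \<Rightarrow> 'm::ab_group_add \<Rightarrow> 'm" +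
  fixes \<delta>M :: "nat \<Rightarrow> 'm \<Rightarrow> 'm"
  assumes deltaM_0: "\<delta>M 0 m = m"
    and deltaM_add: "\<delta>M k (m + m') = \<delta>M k m + \<delta>M k m'"
    and deltaM_scale: "\<delta>M k (scal a m) = (\<Sum>i\<le>k. scal ((\<sigma> ^^ i) (\<delta> (k - i) a)) (\<delta>M i m))"
    and deltaM_deltaM: "\<delta>M i (\<delta>M j m) = scal (\<beta> (i + j) i) (\<delta>M (i + j) m)"
begin

lemma additive_deltaM: "additive (\<delta>M k)"
  by unfold_locales (rule deltaM_add)

lemma kernel_off_multiples_scale:
  assumes a: "a \<in> kernel_off_multiples n \<delta>" and m: "m \<in> kernel_off_multiples n \<delta>M"
  shows "scal a m \<in> kernel_off_multiples n \<delta>M"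
  unfolding kernel_off_multiples_def
proof (intro CollectI allI impI)
  fix j assume j: "\<not> n dvd j"
  have "scal ((\<sigma> ^^ i) (\<delta> (j - i) a)) (\<delta>M i m) = 0" if "i \<le> j" for i
  proof (cases "n dvd i")
    case True
    with j that have "\<not> n dvd (j - i)" using dvd_diffD by blast
    with a show ?thesis by (simp add: kernel_off_multiples_def)
  qed (use m in \<open>simp add: kernel_off_multiples_def\<close>)
  then show "\<delta>M j (scal a m) = 0"
    unfolding deltaM_scale by (intro sum.neutral) simp
qed

lemma kernel_off_multiples_deltaM:
  assumes "m \<in> kernel_off_multiples n \<delta>M"
  shows "\<delta>M (n * k) m \<in> kernel_off_multiples n \<delta>M"
  using assms by (simp add: kernel_off_multiples_def deltaM_deltaM dvd_add_left_iff)

lemma deltaM_scale_kernel_off_multiples: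
  assumes n: "0 < n" and a: "a \<in> kernel_off_multiples n \<delta>" and m: "m \<in> kernel_off_multiples n \<delta>M"
    and fixed: "\<And>x. x \<in> kernel_off_multiples n \<delta> \<Longrightarrow> \<sigma> x = x"
  shows "\<delta>M (n * k) (scal a m) = (\<Sum>i\<le>k. scal (\<delta> (n * i) a) (\<delta>M (n * (k - i)) m))"
proof -
  have "\<delta>M (n * k) (scal a m) = (\<Sum>i\<le>n * k. scal ((\<sigma> ^^ i) (\<delta> (n * k - i) a)) (\<delta>M i m))"
    by (rule deltaM_scale)
  also have "\<dots> = (\<Sum>i\<le>k. scal ((\<sigma> ^^ (n * i)) (\<delta> (n * (k - i)) a)) (\<delta>M (n * i) m))"
    using m by (subst sum_atMost_multiples[OF n]) (simp_all add: kernel_off_multiples_def diff_mult_distrib2)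
  also have "\<dots> = (\<Sum>i\<le>k. scal (\<delta> (n * (k - i)) a) (\<delta>M (n * i) m))"
    using fixed kernel_off_multiples_delta[OF a] by (simp add: funpow_fixed_point)
  also have "\<dots> = (\<Sum>i\<le>k. scal (\<delta> (n * i) a) (\<delta>M (n * (k - i)) m))"
    by (subst sum_atMost_rev) (simp add: diff_diff_cancel cong: sum.cong_simp)
  finally show ?thesis .
qed

lemma deltaM_deltaM_mult:
  assumes "\<And>a b. \<beta> (n * a) (n * b) = of_nat (a choose b)"
  shows "\<delta>M (n * i) (\<delta>M (n * j) m) = scal (of_nat ((i + j) choose i)) (\<delta>M (n * (i + j)) m)"
  using deltaM_deltaM[of "n * i" "n * j" m] assms[of "i + j" i] by (simp add: add_mult_distrib2)

lemma coefficients_kernel_off_multiples: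
  assumes B: "independent B" "finite B" "B \<subseteq> kernel_off_multiples n \<delta>M"
    and m: "(\<Sum>v\<in>B. scal (u v) v) \<in> kernel_off_multiples n \<delta>M"
    and v: "v \<in> B"
  shows "u v \<in> kernel_off_multiples n \<delta>"
proof -
  have "\<forall>v\<in>B. \<delta> j (u v) = 0" if "\<not> n dvd j" for j
    using that
  proof (induction j rule: less_induct)
    case (less j)
    have leading: "\<delta>M j (scal (u v) v) = scal (\<delta> j (u v)) v" if v: "v \<in> B" for v
    proof -
      have "scal ((\<sigma> ^^ i) (\<delta> (j - i) (u v))) (\<delta>M i v) = 0" if "i \<le> j" "i \<noteq> 0" for i
      proof (cases "n dvd i")
        case True
        with less.prems that have "\<not> n dvd (j - i)" using dvd_diffD by blast
        with less.IH that v show ?thesis by simp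
      qed (use v B(3) in \<open>auto simp: kernel_off_multiples_def\<close>)
      then have "\<delta>M j (scal (u v) v) = (\<Sum>i\<in>{0}. scal ((\<sigma> ^^ i) (\<delta> (j - i) (u v))) (\<delta>M i v))"
        unfolding deltaM_scale by (intro sum.mono_neutral_right) auto
      then show ?thesis by (simp add: delta_0 deltaM_0)
    qed
    have "(\<Sum>v\<in>B. scal (\<delta> j (u v)) v) = \<delta>M j (\<Sum>v\<in>B. scal (u v) v)"
      by (simp add: additive.sum[OF additive_deltaM] leading)
    also have "\<dots> = 0"
      using m less.prems by (simp add: kernel_off_multiples_def)
    finally show ?case
      using independentD[OF B(1,2) order_refl, of "\<lambda>v. \<delta> j (u v)"] by blast
  qed
  with v show ?thesis by (simp add: kernel_off_multiples_def)
qed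

text \<open>An \<open>L\<close>-basis of \<open>M\<close> may not lie in \<open>M\<^sub>0\<close>: take a maximal \<open>L\<close>-independent
  subset of \<open>M\<^sub>0\<close> instead; it spans \<open>M\<^sub>0\<close> over the smaller field \<open>L\<^sub>0\<close>.\<close>
lemma finite_basis_kernel_off_multiples:
  assumes "finite B\<^sub>0" and "span B\<^sub>0 = UNIV"
  shows "\<exists>B. finite B \<and> B \<subseteq> kernel_off_multiples n \<delta>M \<and>
    (\<forall>m\<in>kernel_off_multiples n \<delta>M. \<exists>f. (\<forall>b\<in>B. f b \<in> kernel_off_multiples n \<delta>) \<and>
      m = (\<Sum>b\<in>B. scal (f b) b))"
proof -
  obtain B where B: "B \<subseteq> kernel_off_multiples n \<delta>M" "independent B"
    and spans: "kernel_off_multiples n \<delta>M \<subseteq> span B"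
    by (rule maximal_independent_subset)
  have fin: "finite B"
    using independent_span_bound[OF assms(1) B(2)] assms(2) by simp
  have "\<exists>f. (\<forall>b\<in>B. f b \<in> kernel_off_multiples n \<delta>) \<and> m = (\<Sum>b\<in>B. scal (f b) b)"
    if m: "m \<in> kernel_off_multiples n \<delta>M" for m
  proof -
    obtain u where u: "m = (\<Sum>b\<in>B. scal (u b) b)"
      using spans m span_finite[OF fin] by blast
    then show ?thesis
      using coefficients_kernel_off_multiples[OF B(2) fin B(1)] m by blast
  qed
  with fin B(1) show ?thesis by blast
qed

theorem iter_diff_module_kernel_off_multiples:
  assumes "0 < n"
    and "\<And>x. x \<in> kernel_off_multiples n \<delta> \<Longrightarrow> \<sigma> x = x"
    and "\<And>a b. \<beta> (n * a) (n * b) = of_nat (a choose b)"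
    and "finite B\<^sub>0" and "span B\<^sub>0 = UNIV"
  shows "iter_diff_module (kernel_off_multiples n \<delta>) (\<lambda>k. \<delta> (n * k)) scal
    (kernel_off_multiples n \<delta>M) (\<lambda>k. \<delta>M (n * k))"
  unfolding iter_diff_module_def
  using assms kernel_off_multiples_0[OF additive_deltaM]
    kernel_off_multiples_add[OF additive_deltaM] kernel_off_multiples_scale
    finite_basis_kernel_off_multiples kernel_off_multiples_deltaM
    deltaM_scale_kernel_off_multiples deltaM_deltaM_mult
  by (simp add: deltaM_0 deltaM_add)

end

sublocale twisted_iterative_derivation \<subseteq> self: twisted_iterative_module \<sigma> \<delta> \<beta> "(*)" \<delta>
  by unfold_locales (simp_all add: algebra_simps delta_0 delta_add delta_mult delta_delta)

context twisted_iterative_derivation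
begin

lemma kernel_off_multiples_inverse:
  assumes a: "a \<in> kernel_off_multiples n \<delta>"
    and fixed: "\<And>x. x \<in> kernel_off_multiples n \<delta> \<Longrightarrow> \<sigma> x = x"
  shows "inverse a \<in> kernel_off_multiples n \<delta>"
proof (cases "a = 0")
  case True
  then show ?thesis using kernel_off_multiples_0[OF additive_delta] by simp
next
  case False
  have "\<delta> j (inverse a) = 0" if "\<not> n dvd j" for j
    using that
  proof (induction j rule: less_induct)
    case (less j)
    have terms: "(\<sigma> ^^ i) (\<delta> (j - i) a) * \<delta> i (inverse a) = 0" if "i \<le> j" "i \<noteq> j" for i
    proof (cases "n dvd (j - i)")
      case True
      with less.prems that have "\<not> n dvd i" using dvd_diffD by blast
      with less.IH that show ?thesis by simp
    qed (use a in \<open>simp add: kernel_off_multiples_def\<close>)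
    have "0 = \<delta> j (a * inverse a)"
      using False less.prems delta_1_eq_0[of j] by (cases j) auto
    also have "\<dots> = (\<Sum>i\<in>{j}. (\<sigma> ^^ i) (\<delta> (j - i) a) * \<delta> i (inverse a))"
      unfolding delta_mult using terms by (intro sum.mono_neutral_right) auto
    also have "\<dots> = a * \<delta> j (inverse a)"
      using fixed[OF a] by (simp add: delta_0 funpow_fixed_point)
    finally show ?case using False by simp
  qed
  then show ?thesis unfolding kernel_off_multiples_def by blast
qed

theorem iter_diff_field_kernel_off_multiples:
  assumes "0 < n"
    and "\<And>x. x \<in> kernel_off_multiples n \<delta> \<Longrightarrow> \<sigma> x = x"
    and "\<And>a b. \<beta> (n * a) (n * b) = of_nat (a choose b)"
  shows "iter_diff_field (kernel_off_multiples n \<delta>) (\<lambda>k. \<delta> (n * k))"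
  unfolding iter_diff_field_def
  using assms kernel_off_multiples_0[OF additive_delta] kernel_off_multiples_1
    kernel_off_multiples_add[OF additive_delta] kernel_off_multiples_uminus[OF additive_delta]
    self.kernel_off_multiples_scale kernel_off_multiples_inverse kernel_off_multiples_delta
    self.deltaM_scale_kernel_off_multiples self.deltaM_deltaM_mult
  by (simp add: delta_0 delta_add)

end

subsection \<open>Iterative q-difference structures at a root of unity\<close>

lemma field_embedding_of_nat:
  assumes "field_embedding \<iota>"
  shows "\<iota> (of_nat m) = of_nat m"
proof -
  interpret additive \<iota>
    using assms by unfold_locales (simp add: field_embedding_def)
  show ?thesis
    using assms by (induction m) (simp_all add: zero add field_embedding_def)
qed

lemma iter_qdiff_field_twisted:
  "iter_qdiff_field \<iota> q t \<sigma> \<delta> \<Longrightarrow> twisted_iterative_derivation \<sigma> \<delta> (\<lambda>r k. \<iota> (qbinom q r k))"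
  unfolding iter_qdiff_field_def by unfold_locales auto

lemma iter_qdiff_module_twisted:
  assumes "iter_qdiff_field \<iota> q t \<sigma> \<delta>" and "iter_qdiff_module \<iota> q t \<sigma> \<delta> scal \<delta>M"
  shows "twisted_iterative_module \<sigma> \<delta> (\<lambda>r k. \<iota> (qbinom q r k)) scal \<delta>M"
  using iter_qdiff_field_twisted[OF assms(1)] assms(2)
  unfolding twisted_iterative_module_def twisted_iterative_module_axioms_def iter_qdiff_module_def
  by auto

lemma iter_qdiff_field_fixed_if_delta_1:
  assumes "iter_qdiff_field \<iota> q t \<sigma> \<delta>" and "contains_rational_function_field \<iota> t"
    and "q \<noteq> 1" and "\<delta> 1 a = 0"
  shows "\<sigma> a = a"
proof -
  have "\<iota> 0 = 0" and "\<iota> 1 = 1" and "inj \<iota>"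
    using assms(2) field_embedding_of_nat[of \<iota> 0] field_embedding_of_nat[of \<iota> 1]
    unfolding contains_rational_function_field_def field_embedding_def by simp_all
  then have "\<iota> q \<noteq> 1"
    using assms(3) by (metis injD)
  moreover have "t \<noteq> 0"
    using assms(2) \<open>\<iota> 0 = 0\<close> \<open>\<iota> 1 = 1\<close>
    unfolding contains_rational_function_field_def
    by (auto dest!: spec[of _ "[:0, 1:]"] simp: map_poly_pCons)
  ultimately show ?thesis
    using assms(1,4) unfolding iter_qdiff_field_def by simp
qed

theorem proposition3p6:
  fixes \<iota> :: "'c::field \<Rightarrow> 'L::field" and q :: 'c and n :: nat and t :: 'L
    and \<sigma> :: "'L \<Rightarrow> 'L" and \<delta>L :: "nat \<Rightarrow> 'L \<Rightarrow> 'L"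
    and scal :: "'L \<Rightarrow> 'm::ab_group_add \<Rightarrow> 'm" and \<delta>M :: "nat \<Rightarrow> 'm \<Rightarrow> 'm"
  assumes "alg_closed_type TYPE('c)"
    and "n \<ge> 2" and "primitive_root q n"
    and "contains_rational_function_field \<iota> t"
    and "iter_qdiff_field \<iota> q t \<sigma> \<delta>L"
    and "iter_qdiff_module \<iota> q t \<sigma> \<delta>L scal \<delta>M"
  shows "iter_diff_field {a. \<forall>j. \<not> n dvd j \<longrightarrow> \<delta>L j a = 0} (\<lambda>k. \<delta>L (n * k))
       \<and> iter_diff_module {a. \<forall>j. \<not> n dvd j \<longrightarrow> \<delta>L j a = 0} (\<lambda>k. \<delta>L (n * k)) scal
           {m. \<forall>j. \<not> n dvd j \<longrightarrow> \<delta>M j m = 0} (\<lambda>k. \<delta>M (n * k))"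
proof -
  interpret twisted_iterative_module \<sigma> \<delta>L "\<lambda>r k. \<iota> (qbinom q r k)" scal \<delta>M
    using iter_qdiff_module_twisted[OF assms(5,6)] .
  have n: "0 < n" and "q \<noteq> 1"
    using assms(2,3) unfolding primitive_root_def by (auto dest: spec[of _ 1])
  then have fixed: "\<sigma> x = x" if "x \<in> kernel_off_multiples n \<delta>L" for x
    using that assms(2) iter_qdiff_field_fixed_if_delta_1[OF assms(5,4)]
    by (auto simp: kernel_off_multiples_def)
  have "field_embedding \<iota>"
    using assms(4) unfolding contains_rational_function_field_def by simp
  then have binom: "\<iota> (qbinom q (n * a) (n * b)) = of_nat (a choose b)" for a b
    by (simp add: qbinom_mult_mult[OF assms(3) n] field_embedding_of_nat)
  obtain B\<^sub>0 where "finite B\<^sub>0" "span B\<^sub>0 = UNIV"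
    using assms(6) unfolding iter_qdiff_module_def by blast
  then show ?thesis
    using iter_diff_field_kernel_off_multiples[OF n fixed binom]
      iter_diff_module_kernel_off_multiples[OF n fixed binom]
    unfolding kernel_off_multiples_def by blast
qed

end
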